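(* Let $\mathcal E_i\equiv1\to H_i\xrightarrow{\alpha_i}G_i\xrightarrow{\beta_i}K_i\to1$ ($i=1,2$) be central extensions of multiplicative Lie algebras with $\alpha_1(H_1)=\mathcal Z(G_1)$ and $\alpha_2(H_2)=\mathcal Z(G_2)$, and let $(\lambda,\mu,\nu)$ be a morphism from $\mathcal E_1$ to $\mathcal E_2$ such that $\ker\mu\cap{}^M[G_1,G_1]=1$ and $\mu(G_1)\,\alpha_2(H_2)=G_2$. Then $(\lambda,\mu,\nu)$ is an isoclinic morphism.
   Context: A multiplicative Lie algebra is a group $(G,\cdot)$ with a binary operation $\star$ such that for all $x,y,z\in G$: $x\star x=1$; $x\star(yz)=(x\star y)\,{}^y(x\star z)$; $(xy)\star z={}^x(y\star z)(x\star z)$; $((x\star y)\star{}^yz)((y\star z)\star{}^zx)((z\star x)\star{}^xy)=1$; ${}^z(x\star y)={}^zx\star{}^zy$, where ${}^xy=xyx^{-1}$. Homomorphisms preserve both operations. $Z(G)$ is the group center, $LZ(G)=\{x: x\star y=1\ \forall y\}$, $\mathcal Z(G)=LZ(G)\cap Z(G)$; $[x,y]$ is the group commutator; ${}^M[G,G]=(G\star G)[G,G]$ with $G\star G$ the ideal generated by all $a\star b$. A central extension is a short exact sequence $1\to H\xrightarrow{\alpha}G\xrightarrow{\beta}K\to1$ of multiplicative Lie algebras with $\alpha(H)\subseteq\mathcal Z(G)$. A morphism $(\lambda,\mu,\nu)$ from $\mathcal E_1$ to $\mathcal E_2$ consists of homomorphisms $\lambda:H_1\to H_2$, $\mu:G_1\to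 G_2$, $\nu:K_1\to K_2$ with $\mu\alpha_1=\alpha_2\lambda$, $\beta_2\mu=\nu\beta_1$. It is an isoclinic morphism if $\nu$ and $\mu|_{{}^M[G_1,G_1]}:{}^M[G_1,G_1]\to{}^M[G_2,G_2]$ are isomorphisms such that $\mu([g,g'])=[h,h']$ and $\mu(g\star g')=h\star h'$ whenever $g,g'\in G_1$, $h,h'\in G_2$ with $\beta_2(h)=\nu\beta_1(g)$, $\beta_2(h')=\nu\beta_1(g')$. *)

theory Defs
  imports "HOL-Algebra.Coset" "HOL-Algebra.Generated_Groups"
begin

record 'a mla = "'a monoid" + star :: "'a \<Rightarrow> 'a \<Rightarrow> 'a"

definition conjg :: "('a, 'b) monoid_scheme \<Rightarrow> 'a \<Rightarrow> 'a \<Rightarrow> 'a" where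
  "conjg G x y = x \<otimes>\<^bsub>G\<^esub> y \<otimes>\<^bsub>G\<^esub> inv\<^bsub>G\<^esub> x"

definition commg :: "('a, 'b) monoid_scheme \<Rightarrow> 'a \<Rightarrow> 'a \<Rightarrow> 'a" where
  "commg G x y = x \<otimes>\<^bsub>G\<^esub> y \<otimes>\<^bsub>G\<^esub> inv\<^bsub>G\<^esub> x \<otimes>\<^bsub>G\<^esub> inv\<^bsub>G\<^esub> y"

definition mult_lie_alg :: "('a, 'b) mla_scheme \<Rightarrow> bool" where
  "mult_lie_alg G \<longleftrightarrow> group G \<and>
     (\<forall>x\<in>carrier G. \<forall>y\<in>carrier G. star G x y \<in> carrier G) \<and>
     (\<forall>x\<in>carrier G. star G x x = \<one>\<^bsub>G\<^esub>) \<and>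
     (\<forall>x\<in>carrier G. \<forall>y\<in>carrier G. \<forall>z\<in>carrier G.
        star G x (y \<otimes>\<^bsub>G\<^esub> z) = star G x y \<otimes>\<^bsub>G\<^esub> conjg G y (star G x z)) \<and>
     (\<forall>x\<in>carrier G. \<forall>y\<in>carrier G. \<forall>z\<in>carrier G.
        star G (x \<otimes>\<^bsub>G\<^esub> y) z = conjg G x (star G y z) \<otimes>\<^bsub>G\<^esub> star G x z) \<and>
     (\<forall>x\<in>carrier G. \<forall>y\<in>carrier G. \<forall>z\<in>carrier G.
        star G (star G x y) (conjg G y z) \<otimes>\<^bsub>G\<^esub> star G (star G y z) (conjg G z x)
          \<otimes>\<^bsub>G\<^esub> star G (star G z x) (conjg G x y) = \<one>\<^bsub>G\<^esub>) \<and>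
     (\<forall>x\<in>carrier G. \<forall>y\<in>carrier G. \<forall>z\<in>carrier G.
        conjg G z (star G x y) = star G (conjg G z x) (conjg G z y))"

definition mla_hom :: "('a, 'c) mla_scheme \<Rightarrow> ('b, 'd) mla_scheme \<Rightarrow> ('a \<Rightarrow> 'b) set" where
  "mla_hom G H = {f. f \<in> hom G H \<and>
      (\<forall>x\<in>carrier G. \<forall>y\<in>carrier G. f (star G x y) = star H (f x) (f y))}"

definition group_center :: "('a, 'b) monoid_scheme \<Rightarrow> 'a set" where
  "group_center G = {x \<in> carrier G. \<forall>y\<in>carrier G. x \<otimes>\<^bsub>G\<^esub> y = y \<otimes>\<^bsub>G\<^esub> x}"

definition lie_center :: "('a, 'b) mla_scheme \<Rightarrow> 'a set" where
  "lie_center G = {x \<in> carrier G. \<forall>y\<in>carrier G. star G x y = \<one>\<^bsub>G\<^esub>}"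

definition mla_center :: "('a, 'b) mla_scheme \<Rightarrow> 'a set" where
  "mla_center G = lie_center G \<inter> group_center G"

definition mla_ideal :: "'a set \<Rightarrow> ('a, 'b) mla_scheme \<Rightarrow> bool" where
  "mla_ideal I G \<longleftrightarrow> I \<lhd> G \<and> (\<forall>g\<in>carrier G. \<forall>i\<in>I. star G g i \<in> I)"

definition star_ideal :: "('a, 'b) mla_scheme \<Rightarrow> 'a set" where
  "star_ideal G = \<Inter>{I. mla_ideal I G \<and>
       (\<forall>a\<in>carrier G. \<forall>b\<in>carrier G. star G a b \<in> I)}"

definition M_comm :: "('a, 'b) mla_scheme \<Rightarrow> 'a set" where
  "M_comm G = star_ideal G <#>\<^bsub>G\<^esub> derived G (carrier G)"

definition central_extension ::
  "('h, 'x) mla_scheme \<Rightarrow> ('g, 'y) mla_scheme \<Rightarrow> ('k, 'z) mla_scheme \<Rightarrow>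
   ('h \<Rightarrow> 'g) \<Rightarrow> ('g \<Rightarrow> 'k) \<Rightarrow> bool" where
  "central_extension H G K \<alpha> \<beta> \<longleftrightarrow>
     mult_lie_alg H \<and> mult_lie_alg G \<and> mult_lie_alg K \<and>
     \<alpha> \<in> mla_hom H G \<and> \<beta> \<in> mla_hom G K \<and>
     inj_on \<alpha> (carrier H) \<and> \<beta> ` carrier G = carrier K \<and>
     \<alpha> ` carrier H = kernel G K \<beta> \<and>
     \<alpha> ` carrier H \<subseteq> mla_center G"

definition ext_morphism ::
  "('h1, 'x1) mla_scheme \<Rightarrow> ('g1, 'y1) mla_scheme \<Rightarrow> ('k1, 'z1) mla_scheme \<Rightarrow>
   ('h1 \<Rightarrow> 'g1) \<Rightarrow> ('g1 \<Rightarrow> 'k1) \<Rightarrow>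
   ('h2, 'x2) mla_scheme \<Rightarrow> ('g2, 'y2) mla_scheme \<Rightarrow> ('k2, 'z2) mla_scheme \<Rightarrow>
   ('h2 \<Rightarrow> 'g2) \<Rightarrow> ('g2 \<Rightarrow> 'k2) \<Rightarrow>
   ('h1 \<Rightarrow> 'h2) \<Rightarrow> ('g1 \<Rightarrow> 'g2) \<Rightarrow> ('k1 \<Rightarrow> 'k2) \<Rightarrow> bool" where
  "ext_morphism H1 G1 K1 \<alpha>1 \<beta>1 H2 G2 K2 \<alpha>2 \<beta>2 lam \<mu> \<nu> \<longleftrightarrow>
     lam \<in> mla_hom H1 H2 \<and> \<mu> \<in> mla_hom G1 G2 \<and> \<nu> \<in> mla_hom K1 K2 \<and>
     (\<forall>h\<in>carrier H1. \<mu> (\<alpha>1 h) = \<alpha>2 (lam h)) \<and>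
     (\<forall>g\<in>carrier G1. \<beta>2 (\<mu> g) = \<nu> (\<beta>1 g))"

definition isoclinic_morphism ::
  "('h1, 'x1) mla_scheme \<Rightarrow> ('g1, 'y1) mla_scheme \<Rightarrow> ('k1, 'z1) mla_scheme \<Rightarrow>
   ('h1 \<Rightarrow> 'g1) \<Rightarrow> ('g1 \<Rightarrow> 'k1) \<Rightarrow>
   ('h2, 'x2) mla_scheme \<Rightarrow> ('g2, 'y2) mla_scheme \<Rightarrow> ('k2, 'z2) mla_scheme \<Rightarrow>
   ('h2 \<Rightarrow> 'g2) \<Rightarrow> ('g2 \<Rightarrow> 'k2) \<Rightarrow>
   ('h1 \<Rightarrow> 'h2) \<Rightarrow> ('g1 \<Rightarrow> 'g2) \<Rightarrow> ('k1 \<Rightarrow> 'k2) \<Rightarrow> bool" where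
  "isoclinic_morphism H1 G1 K1 \<alpha>1 \<beta>1 H2 G2 K2 \<alpha>2 \<beta>2 lam \<mu> \<nu> \<longleftrightarrow>
     ext_morphism H1 G1 K1 \<alpha>1 \<beta>1 H2 G2 K2 \<alpha>2 \<beta>2 lam \<mu> \<nu> \<and>
     bij_betw \<nu> (carrier K1) (carrier K2) \<and>
     bij_betw \<mu> (M_comm G1) (M_comm G2) \<and>
     (\<forall>g\<in>carrier G1. \<forall>g'\<in>carrier G1. \<forall>h\<in>carrier G2. \<forall>h'\<in>carrier G2.
        \<beta>2 h = \<nu> (\<beta>1 g) \<longrightarrow> \<beta>2 h' = \<nu> (\<beta>1 g') \<longrightarrow>
        \<mu> (commg G1 g g') = commg G2 h h' \<and> \<mu> (star G1 g g') = star G2 h h')"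

end

theory Submission
  imports Defs "HOL-Algebra.Zassenhaus"
begin

text \<open>Since \<open>G\<^sub>2 = \<mu>(G\<^sub>1) \<Z>(G\<^sub>2)\<close>, every element of \<open>G\<^sub>2\<close> is an image under \<open>\<mu>\<close> times a central
  element, and central factors can be dropped from both arguments of a commutator and of a star.
  This gives the compatibility conditions of an isoclinism, and shows that \<open>\<mu>\<close> maps the star
  ideal and the derived subgroup of \<open>G\<^sub>1\<close> onto those of \<open>G\<^sub>2\<close>, hence \<open>\<^sup>M[G\<^sub>1,G\<^sub>1]\<close> onto
  \<open>\<^sup>M[G\<^sub>2,G\<^sub>2]\<close>. The hypothesis \<open>ker \<mu> \<inter> \<^sup>M[G\<^sub>1,G\<^sub>1] = 1\<close> makes \<open>\<mu>\<close> injective there, and,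
  because \<open>[g,y]\<close> and \<open>g \<star> y\<close> lie in \<open>\<^sup>M[G\<^sub>1,G\<^sub>1]\<close>, it forces \<open>\<mu>\<^sup>-\<^sup>1(\<Z>(G\<^sub>2)) \<subseteq> \<Z>(G\<^sub>1)\<close>.
  As \<open>\<Z>(G\<^sub>i) = ker \<beta>\<^sub>i\<close>, the latter is injectivity of \<open>\<nu>\<close>; surjectivity of \<open>\<nu>\<close> again comes from
  \<open>G\<^sub>2 = \<mu>(G\<^sub>1) \<Z>(G\<^sub>2)\<close>.\<close>

lemma (in group) inv_mult_cancel_left [simp]:
  "\<lbrakk>x \<in> carrier G; y \<in> carrier G\<rbrakk> \<Longrightarrow> inv x \<otimes> (x \<otimes> y) = y"
  by (simp flip: m_assoc)

lemma (in group) mult_inv_cancel_left [simp]: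
  "\<lbrakk>x \<in> carrier G; y \<in> carrier G\<rbrakk> \<Longrightarrow> x \<otimes> (inv x \<otimes> y) = y"
  by (simp flip: m_assoc)

lemma (in group) conjg_closed [simp]:
  "x \<in> carrier G \<Longrightarrow> a \<in> carrier G \<Longrightarrow> conjg G x a \<in> carrier G"
  by (simp add: conjg_def)

lemma (in group) conjg_one [simp]: "x \<in> carrier G \<Longrightarrow> conjg G x \<one> = \<one>"
  by (simp add: conjg_def)

lemma (in group) conjg_mult:
  "\<lbrakk>x \<in> carrier G; a \<in> carrier G; b \<in> carrier G\<rbrakk> \<Longrightarrow>
    conjg G x (a \<otimes> b) = conjg G x a \<otimes> conjg G x b"
  by (simp add: conjg_def m_assoc)

lemma (in group) conjg_eq_one_iff [simp]:
  assumes "x \<in> carrier G" "a \<in> carrier G"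
  shows "conjg G x a = \<one> \<longleftrightarrow> a = \<one>"
proof
  assume "conjg G x a = \<one>"
  then have "x \<otimes> a \<otimes> inv x \<otimes> x = x" using assms(1) by (simp add: conjg_def)
  then show "a = \<one>" using assms by (simp add: m_assoc)
qed (simp add: assms)

lemma (in group) conjg_mult_central:
  assumes "x \<in> carrier G" "a \<in> carrier G" "c \<in> group_center G"
  shows "conjg G (x \<otimes> c) a = conjg G x a"
proof -
  have c: "c \<in> carrier G" "c \<otimes> a = a \<otimes> c" using assms by (auto simp: group_center_def)
  then have "c \<otimes> a \<otimes> inv c = a" using assms(2) by (simp add: m_assoc)
  moreover have "conjg G (x \<otimes> c) a = x \<otimes> (c \<otimes> a \<otimes> inv c) \<otimes> inv x"
    using assms(1,2) c(1) by (simp add: conjg_def inv_mult_group m_assoc)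
  ultimately show ?thesis by (simp add: conjg_def)
qed

lemma (in group) commg_eq_one_iff:
  assumes xy: "x \<in> carrier G" "y \<in> carrier G"
  shows "commg G x y = \<one> \<longleftrightarrow> x \<otimes> y = y \<otimes> x"
proof -
  have "commg G x y = (x \<otimes> y) \<otimes> inv (y \<otimes> x)"
    using xy by (simp add: commg_def inv_mult_group m_assoc)
  then show ?thesis using xy by (simp add: inv_solve_right')
qed

lemma (in group) conjg_central:
  "\<lbrakk>x \<in> carrier G; c \<in> group_center G\<rbrakk> \<Longrightarrow> conjg G x c = c"
  by (simp add: conjg_def group_center_def m_assoc)

lemma (in group) commg_eq_conjg:
  "\<lbrakk>x \<in> carrier G; y \<in> carrier G\<rbrakk> \<Longrightarrow> commg G x y = conjg G x y \<otimes> inv y"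
  by (simp add: commg_def conjg_def)

lemma (in group) commg_mult_central:
  assumes x: "x \<in> carrier G" and y: "y \<in> carrier G"
    and c: "c \<in> group_center G" and d: "d \<in> group_center G"
  shows "commg G (x \<otimes> c) (y \<otimes> d) = commg G x y"
proof -
  have cd: "c \<in> carrier G" "d \<in> carrier G" using c d by (auto simp: group_center_def)
  have "commg G (x \<otimes> c) (y \<otimes> d) = conjg G x (y \<otimes> d) \<otimes> (inv d \<otimes> inv y)"
    using x y c cd by (simp add: commg_eq_conjg conjg_mult_central inv_mult_group)
  also have "\<dots> = conjg G x y \<otimes> d \<otimes> (inv d \<otimes> inv y)"
    using x y d cd by (simp add: conjg_mult conjg_central)
  also have "\<dots> = commg G x y"
    using x y cd by (simp add: commg_eq_conjg m_assoc)
  finally show ?thesis .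
qed

lemma derived_set_eq_commg:
  "derived_set G K = (\<Union>x\<in>K. \<Union>y\<in>K. {commg G x y})"
  by (simp add: commg_def)

locale mult_lie_algebra =
  fixes G :: "('a, 'b) mla_scheme" (structure)
  assumes mult_lie_alg: "mult_lie_alg G"

sublocale mult_lie_algebra \<subseteq> group G
  using mult_lie_alg by (simp add: mult_lie_alg_def)

context mult_lie_algebra
begin

lemma star_closed [simp]: "\<lbrakk>x \<in> carrier G; y \<in> carrier G\<rbrakk> \<Longrightarrow> star G x y \<in> carrier G"
  using mult_lie_alg by (simp add: mult_lie_alg_def)

lemma star_self [simp]: "x \<in> carrier G \<Longrightarrow> star G x x = \<one>"
  using mult_lie_alg by (simp add: mult_lie_alg_def)

lemma star_mult_right:
  "\<lbrakk>x \<in> carrier G; y \<in> carrier G; z \<in> carrier G\<rbrakk> \<Longrightarrow>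
    star G x (y \<otimes> z) = star G x y \<otimes> conjg G y (star G x z)"
  using mult_lie_alg by (simp add: mult_lie_alg_def)

lemma star_mult_left:
  "\<lbrakk>x \<in> carrier G; y \<in> carrier G; z \<in> carrier G\<rbrakk> \<Longrightarrow>
    star G (x \<otimes> y) z = conjg G x (star G y z) \<otimes> star G x z"
  using mult_lie_alg by (simp add: mult_lie_alg_def)

lemma star_antisym:
  assumes x: "x \<in> carrier G" and y: "y \<in> carrier G"
  shows "star G y x \<otimes> star G x y = \<one>"
proof -
  have "\<one> = star G (x \<otimes> y) (x \<otimes> y)" using x y by simp
  also have "\<dots> = conjg G x (star G y (x \<otimes> y)) \<otimes> star G x (x \<otimes> y)"
    using x y by (intro star_mult_left) auto
  also have "\<dots> = conjg G x (star G y x) \<otimes> conjg G x (star G x y)"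
    using x y by (simp add: star_mult_right)
  also have "\<dots> = conjg G x (star G y x \<otimes> star G x y)"
    using x y by (simp add: conjg_mult)
  finally show ?thesis using x y by (metis conjg_eq_one_iff m_closed star_closed)
qed

lemma star_lie_center_right:
  assumes x: "x \<in> carrier G" and c: "c \<in> lie_center G"
  shows "star G x c = \<one>"
proof -
  have c': "c \<in> carrier G" "star G c x = \<one>" using c x by (auto simp: lie_center_def)
  then show ?thesis using star_antisym[OF x c'(1)] x by simp
qed

lemma star_mult_center_left:
  assumes "x \<in> carrier G" "y \<in> carrier G" "c \<in> mla_center G"
  shows "star G (x \<otimes> c) y = star G x y"
  using assms by (simp add: star_mult_left mla_center_def lie_center_def)

lemma star_mult_center_right:
  assumes "x \<in> carrier G" "y \<in> carrier G" "c \<in> mla_center G"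
  shows "star G x (y \<otimes> c) = star G x y"
  using assms star_lie_center_right[of x c]
  by (simp add: star_mult_right mla_center_def lie_center_def)

lemma star_mult_center:
  assumes "x \<in> carrier G" "y \<in> carrier G" "c \<in> mla_center G" "d \<in> mla_center G"
  shows "star G (x \<otimes> c) (y \<otimes> d) = star G x y"
  using assms by (simp add: star_mult_center_left star_mult_center_right mla_center_def lie_center_def)

lemma mla_center_subset_group_center: "mla_center G \<subseteq> group_center G"
  by (simp add: mla_center_def)

lemma star_in_star_ideal: "\<lbrakk>a \<in> carrier G; b \<in> carrier G\<rbrakk> \<Longrightarrow> star G a b \<in> star_ideal G"
  by (auto simp: star_ideal_def)

lemma star_ideal_least:
  "\<lbrakk>mla_ideal I G; \<And>a b. \<lbrakk>a \<in> carrier G; b \<in> carrier G\<rbrakk> \<Longrightarrow> star G a b \<in> I\<rbrakk> \<Longrightarrow>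
    star_ideal G \<subseteq> I"
  by (auto simp: star_ideal_def)

lemma mla_ideal_carrier: "mla_ideal (carrier G) G"
  by (simp add: mla_ideal_def normal_inv_iff subgroup_self)

lemma mla_ideal_star_ideal: "mla_ideal (star_ideal G) G"
proof -
  let ?\<I> = "{I. mla_ideal I G \<and> (\<forall>a\<in>carrier G. \<forall>b\<in>carrier G. star G a b \<in> I)}"
  have "carrier G \<in> ?\<I>" using mla_ideal_carrier by simp
  then have "subgroup (star_ideal G) G"
    unfolding star_ideal_def by (intro subgroups_Inter) (auto simp: mla_ideal_def normal_imp_subgroup)
  then show ?thesis
    unfolding mla_ideal_def normal_inv_iff by (auto simp: star_ideal_def mla_ideal_def normal_inv_iff)
qed

lemma star_ideal_subset: "star_ideal G \<subseteq> carrier G"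
  using mla_ideal_star_ideal by (simp add: mla_ideal_def normal_imp_subgroup subgroup.subset)

lemma subgroup_M_comm: "subgroup (M_comm G) G"
  using mla_ideal_star_ideal derived_is_subgroup[of "carrier G"]
  by (simp add: M_comm_def mla_ideal_def mult_norm_subgroup)

lemma star_in_M_comm:
  assumes "a \<in> carrier G" "b \<in> carrier G"
  shows "star G a b \<in> M_comm G"
proof -
  have "star G a b \<otimes> \<one> \<in> M_comm G"
    unfolding M_comm_def set_mult_def
    using assms star_in_star_ideal subgroup.one_closed[OF derived_is_subgroup] by blast
  then show ?thesis using assms by simp
qed

lemma commg_in_M_comm:
  assumes "a \<in> carrier G" "b \<in> carrier G"
  shows "commg G a b \<in> M_comm G"
proof -
  have "commg G a b \<in> derived G (carrier G)"
    unfolding derived_def derived_set_eq_commg using assms by (blast intro: generate.incl)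
  then have "\<one> \<otimes> commg G a b \<in> M_comm G"
    unfolding M_comm_def set_mult_def
    using mla_ideal_star_ideal subgroup.one_closed normal_imp_subgroup
    by (fastforce simp: mla_ideal_def)
  then show ?thesis using assms by (simp add: commg_def)
qed

end

locale mla_morphism = G: mult_lie_algebra G + H: mult_lie_algebra H
  for G :: "('a, 'c) mla_scheme" (structure) and H :: "('b, 'd) mla_scheme" (structure) +
  fixes f :: "'a \<Rightarrow> 'b"
  assumes in_mla_hom: "f \<in> mla_hom G H"

sublocale mla_morphism \<subseteq> group_hom G H f
  using in_mla_hom by unfold_locales (simp add: mla_hom_def)

context mla_morphism
begin

lemma hom_star: "\<lbrakk>x \<in> carrier G; y \<in> carrier G\<rbrakk> \<Longrightarrow> f (star G x y) = star H (f x) (f y)"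
  using in_mla_hom by (simp add: mla_hom_def)

lemma hom_commg: "\<lbrakk>x \<in> carrier G; y \<in> carrier G\<rbrakk> \<Longrightarrow> f (commg G x y) = commg H (f x) (f y)"
  by (simp add: commg_def)

lemma inj_on_M_comm:
  assumes "kernel G H f \<inter> M_comm G = {\<one>}"
  shows "inj_on f (M_comm G)"
proof -
  have "M_comm G \<subseteq> carrier G" using G.subgroup_M_comm by (rule subgroup.subset)
  then have "kernel (G\<lparr>carrier := M_comm G\<rparr>) H f = kernel G H f \<inter> M_comm G"
    by (auto simp: kernel_def)
  then show ?thesis using assms inj_on_subgroup_iff_trivial_ker[OF G.subgroup_M_comm] by simp
qed

lemma mla_center_preimage:
  assumes ker: "kernel G H f \<inter> M_comm G = {\<one>}"
    and g: "g \<in> carrier G" and fg: "f g \<in> mla_center H"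
  shows "g \<in> mla_center G"
proof -
  have "g \<otimes> y = y \<otimes> g \<and> star G g y = \<one>" if y: "y \<in> carrier G" for y
  proof -
    have "f (commg G g y) = \<one>\<^bsub>H\<^esub>" and "f (star G g y) = \<one>\<^bsub>H\<^esub>"
      using fg g y by (auto simp: hom_commg hom_star H.commg_eq_one_iff mla_center_def
          group_center_def lie_center_def)
    then have "commg G g y = \<one>" and "star G g y = \<one>"
      using ker g y G.commg_in_M_comm G.star_in_M_comm by (auto simp: kernel_def commg_def)
    then show ?thesis using g y G.commg_eq_one_iff by simp
  qed
  then show ?thesis using g by (auto simp: mla_center_def group_center_def lie_center_def)
qed

lemma mla_ideal_preimage:
  assumes I: "mla_ideal I H"
  shows "mla_ideal {x \<in> carrier G. f x \<in> I} G"
proof -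
  have "subgroup I H" "\<And>x h. \<lbrakk>x \<in> carrier H; h \<in> I\<rbrakk> \<Longrightarrow> x \<otimes>\<^bsub>H\<^esub> h \<otimes>\<^bsub>H\<^esub> inv\<^bsub>H\<^esub> x \<in> I"
    and "\<And>x h. \<lbrakk>x \<in> carrier H; h \<in> I\<rbrakk> \<Longrightarrow> star H x h \<in> I"
    using I by (auto simp: mla_ideal_def H.normal_inv_iff)
  then show ?thesis
    unfolding mla_ideal_def G.normal_inv_iff
    by (auto intro!: G.subgroupI simp: hom_star subgroup.one_closed subgroup.m_inv_closed
        subgroup.m_closed)
qed

end

locale mla_morphism_onto_mod_center = mla_morphism +
  assumes image_mult_center: "f ` carrier G <#>\<^bsub>H\<^esub> mla_center H = carrier H"

context mla_morphism_onto_mod_center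
begin

lemma decompose:
  assumes "h \<in> carrier H"
  obtains g c where "g \<in> carrier G" "c \<in> mla_center H" "h = f g \<otimes>\<^bsub>H\<^esub> c"
  using assms image_mult_center[symmetric] by (auto simp: set_mult_def)

lemma mla_ideal_image:
  assumes I: "mla_ideal I G"
  shows "mla_ideal (f ` I) H"
proof -
  have sub: "subgroup I G" and conj: "\<And>x i. \<lbrakk>x \<in> carrier G; i \<in> I\<rbrakk> \<Longrightarrow> conjg G x i \<in> I"
    and star: "\<And>x i. \<lbrakk>x \<in> carrier G; i \<in> I\<rbrakk> \<Longrightarrow> star G x i \<in> I"
    using I by (auto simp: mla_ideal_def G.normal_inv_iff conjg_def)
  have I_carrier: "I \<subseteq> carrier G" using sub by (rule subgroup.subset)
  have "conjg H x (f i) \<in> f ` I \<and> star H x (f i) \<in> f ` I" if x: "x \<in> carrier H" and i: "i \<in> I" for x i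
  proof -
    obtain g c where g: "g \<in> carrier G" and c: "c \<in> mla_center H" and x_eq: "x = f g \<otimes>\<^bsub>H\<^esub> c"
      using decompose x by blast
    have i_carrier: "i \<in> carrier G" using i I_carrier by blast
    have "conjg H x (f i) = conjg H (f g) (f i)"
      using g c i_carrier H.mla_center_subset_group_center
      by (simp add: x_eq H.conjg_mult_central subsetD)
    also have "\<dots> = f (conjg G g i)"
      using g i_carrier by (simp add: conjg_def)
    finally have "conjg H x (f i) = f (conjg G g i)" .
    moreover have "star H x (f i) = f (star G g i)"
      using g c i_carrier by (simp add: x_eq H.star_mult_center_left hom_star)
    ultimately show ?thesis using conj star g i by blast
  qed
  then show ?thesis
    using subgroup_img_is_subgroup[OF sub]
    by (auto simp: mla_ideal_def H.normal_inv_iff conjg_def)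
qed


lemma star_commg_lift:
  assumes "a \<in> carrier H" "b \<in> carrier H"
  obtains g g' where "g \<in> carrier G" "g' \<in> carrier G"
    "star H a b = f (star G g g')" "commg H a b = f (commg G g g')"
proof -
  obtain g c g' c' where g: "g \<in> carrier G" "g' \<in> carrier G"
    and c: "c \<in> mla_center H" "c' \<in> mla_center H"
    and ab: "a = f g \<otimes>\<^bsub>H\<^esub> c" "b = f g' \<otimes>\<^bsub>H\<^esub> c'"
    using decompose assms by metis
  have "star H a b = f (star G g g')"
    using g c by (simp add: ab H.star_mult_center hom_star)
  moreover have "commg H a b = f (commg G g g')"
    using g c H.mla_center_subset_group_center by (simp add: ab H.commg_mult_central hom_commg subsetD)
  ultimately show ?thesis using that g by blast
qed

lemma image_star_ideal: "f ` star_ideal G = star_ideal H"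
proof
  have "star_ideal G \<subseteq> {x \<in> carrier G. f x \<in> star_ideal H}"
    using mla_ideal_preimage[OF H.mla_ideal_star_ideal]
    by (rule G.star_ideal_least) (simp add: hom_star H.star_in_star_ideal)
  then show "f ` star_ideal G \<subseteq> star_ideal H" by blast
next
  show "star_ideal H \<subseteq> f ` star_ideal G"
    using mla_ideal_image[OF G.mla_ideal_star_ideal]
  proof (rule H.star_ideal_least)
    fix a b assume "a \<in> carrier H" "b \<in> carrier H"
    then show "star H a b \<in> f ` star_ideal G"
      by (metis star_commg_lift G.star_in_star_ideal imageI)
  qed
qed

lemma image_derived: "f ` derived G (carrier G) = derived H (carrier H)"
proof -
  have "derived_set H (carrier H) \<subseteq> f ` derived_set G (carrier G)"
  proof
    fix z assume "z \<in> derived_set H (carrier H)"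
    then obtain a b where ab: "a \<in> carrier H" "b \<in> carrier H" and z: "z = commg H a b"
      unfolding derived_set_eq_commg by blast
    obtain g g' where g: "g \<in> carrier G" "g' \<in> carrier G"
      and "star H a b = f (star G g g')" "commg H a b = f (commg G g g')"
      by (rule star_commg_lift[OF ab])
    then show "z \<in> f ` derived_set G (carrier G)"
      unfolding z derived_set_eq_commg by blast
  qed
  moreover have "f ` derived_set G (carrier G) \<subseteq> derived_set H (carrier H)"
    unfolding derived_set_eq_commg by (auto simp: hom_commg intro!: bexI)
  ultimately have "derived_set H (carrier H) = f ` derived_set G (carrier G)" ..
  then show ?thesis
    unfolding derived_def using generate_img[OF G.derived_set_in_carrier[OF subset_refl]] by simp
qed

lemma image_M_comm: "f ` M_comm G = M_comm H"
  using set_mult_hom[OF homh G.star_ideal_subset G.derived_in_carrier[OF subset_refl]]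
  by (simp add: M_comm_def image_star_ideal image_derived)

end

lemma central_extension_mla_morphism:
  "central_extension H G K \<alpha> \<beta> \<Longrightarrow> mla_morphism G K \<beta>"
  by (simp add: central_extension_def mla_morphism_def mla_morphism_axioms_def mult_lie_algebra_def)

lemma central_extension_kernel:
  "\<lbrakk>central_extension H G K \<alpha> \<beta>; \<alpha> ` carrier H = mla_center G\<rbrakk> \<Longrightarrow> kernel G K \<beta> = mla_center G"
  by (simp add: central_extension_def)

lemma central_extension_same_fibre:
  assumes E: "central_extension H G K \<alpha> \<beta>" and Z: "\<alpha> ` carrier H = mla_center G"
    and g: "g \<in> carrier G" and h: "h \<in> carrier G" and fibre: "\<beta> h = \<beta> g"
  shows "inv\<^bsub>G\<^esub> g \<otimes>\<^bsub>G\<^esub> h \<in> mla_center G"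
proof -
  interpret \<beta>: mla_morphism G K \<beta> using E by (rule central_extension_mla_morphism)
  have "inv\<^bsub>G\<^esub> g \<otimes>\<^bsub>G\<^esub> h \<in> kernel G K \<beta>"
    using g h fibre by (simp add: kernel_def)
  then show ?thesis using central_extension_kernel[OF E Z] by simp
qed

lemma ext_morphism_mla_morphisms:
  assumes "central_extension H1 G1 K1 \<alpha>1 \<beta>1" "central_extension H2 G2 K2 \<alpha>2 \<beta>2"
    and "ext_morphism H1 G1 K1 \<alpha>1 \<beta>1 H2 G2 K2 \<alpha>2 \<beta>2 lam \<mu> \<nu>"
  shows "mla_morphism G1 G2 \<mu>" and "mla_morphism K1 K2 \<nu>"
  using assms by (simp_all add: mla_morphism_def mla_morphism_axioms_def ext_morphism_def
      central_extension_def mult_lie_algebra_def)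

lemma ext_morphism_quotient_bij:
  assumes E1: "central_extension H1 G1 K1 \<alpha>1 \<beta>1" and E2: "central_extension H2 G2 K2 \<alpha>2 \<beta>2"
    and Z1: "\<alpha>1 ` carrier H1 = mla_center G1" and Z2: "\<alpha>2 ` carrier H2 = mla_center G2"
    and mor: "ext_morphism H1 G1 K1 \<alpha>1 \<beta>1 H2 G2 K2 \<alpha>2 \<beta>2 lam \<mu> \<nu>"
    and center_preimage: "\<And>g. \<lbrakk>g \<in> carrier G1; \<mu> g \<in> mla_center G2\<rbrakk> \<Longrightarrow> g \<in> mla_center G1"
    and cover: "\<mu> ` carrier G1 <#>\<^bsub>G2\<^esub> mla_center G2 = carrier G2"
  shows "bij_betw \<nu> (carrier K1) (carrier K2)"
proof -
  interpret \<beta>1: mla_morphism G1 K1 \<beta>1 using E1 by (rule central_extension_mla_morphism)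
  interpret \<beta>2: mla_morphism G2 K2 \<beta>2 using E2 by (rule central_extension_mla_morphism)
  interpret \<nu>: mla_morphism K1 K2 \<nu> by (rule ext_morphism_mla_morphisms(2)[OF E1 E2 mor])
  have square: "\<And>g. g \<in> carrier G1 \<Longrightarrow> \<beta>2 (\<mu> g) = \<nu> (\<beta>1 g)"
    and \<mu>_closed: "\<And>g. g \<in> carrier G1 \<Longrightarrow> \<mu> g \<in> carrier G2"
    using mor by (auto simp: ext_morphism_def mla_hom_def hom_def)
  have \<beta>1_onto: "\<beta>1 ` carrier G1 = carrier K1" and \<beta>2_onto: "\<beta>2 ` carrier G2 = carrier K2"
    using E1 E2 by (simp_all add: central_extension_def)
  note ker1 = central_extension_kernel[OF E1 Z1] and ker2 = central_extension_kernel[OF E2 Z2]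
  have "kernel K1 K2 \<nu> \<subseteq> {\<one>\<^bsub>K1\<^esub>}"
  proof
    fix k assume k: "k \<in> kernel K1 K2 \<nu>"
    then obtain g where g: "g \<in> carrier G1" and k_eq: "k = \<beta>1 g"
      using \<beta>1_onto by (auto simp: kernel_def)
    have "\<mu> g \<in> kernel G2 K2 \<beta>2" using k g \<mu>_closed by (simp add: kernel_def k_eq square)
    then have "g \<in> kernel G1 K1 \<beta>1" using center_preimage g ker1 ker2 by simp
    then show "k \<in> {\<one>\<^bsub>K1\<^esub>}" by (simp add: kernel_def k_eq)
  qed
  then have "inj_on \<nu> (carrier K1)"
    using \<nu>.inj_iff_trivial_ker subgroup.one_closed[OF \<nu>.subgroup_kernel] by blast
  moreover have "carrier K2 \<subseteq> \<nu> ` carrier K1"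
  proof
    fix k assume "k \<in> carrier K2"
    then obtain h where h: "h \<in> carrier G2" and k_eq: "k = \<beta>2 h"
      using \<beta>2_onto by blast
    then obtain g c where g: "g \<in> carrier G1" and c: "c \<in> mla_center G2"
      and h_eq: "h = \<mu> g \<otimes>\<^bsub>G2\<^esub> c"
      using cover unfolding set_mult_def by blast
    have "\<beta>2 c = \<one>\<^bsub>K2\<^esub>" "c \<in> carrier G2" using c ker2 by (auto simp: kernel_def)
    then have "k = \<nu> (\<beta>1 g)" using g \<mu>_closed by (simp add: k_eq h_eq square)
    then show "k \<in> \<nu> ` carrier K1" using g \<beta>1.hom_closed by blast
  qed
  ultimately show ?thesis by (auto simp: bij_betw_def)
qed

lemma ext_morphism_commg_star:
  assumes E1: "central_extension H1 G1 K1 \<alpha>1 \<beta>1" and E2: "central_extension H2 G2 K2 \<alpha>2 \<beta>2"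
    and Z2: "\<alpha>2 ` carrier H2 = mla_center G2"
    and mor: "ext_morphism H1 G1 K1 \<alpha>1 \<beta>1 H2 G2 K2 \<alpha>2 \<beta>2 lam \<mu> \<nu>"
    and g: "g \<in> carrier G1" "g' \<in> carrier G1" and h: "h \<in> carrier G2" "h' \<in> carrier G2"
    and fibre: "\<beta>2 h = \<nu> (\<beta>1 g)" "\<beta>2 h' = \<nu> (\<beta>1 g')"
  shows "\<mu> (commg G1 g g') = commg G2 h h' \<and> \<mu> (star G1 g g') = star G2 h h'"
proof -
  interpret \<mu>: mla_morphism G1 G2 \<mu> by (rule ext_morphism_mla_morphisms(1)[OF E1 E2 mor])
  have square: "\<beta>2 (\<mu> g) = \<nu> (\<beta>1 g)" "\<beta>2 (\<mu> g') = \<nu> (\<beta>1 g')"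
    using mor g by (auto simp: ext_morphism_def)
  define c c' where "c = inv\<^bsub>G2\<^esub> \<mu> g \<otimes>\<^bsub>G2\<^esub> h" and "c' = inv\<^bsub>G2\<^esub> \<mu> g' \<otimes>\<^bsub>G2\<^esub> h'"
  have c: "c \<in> mla_center G2" "c' \<in> mla_center G2"
    using central_extension_same_fibre[OF E2 Z2] g h fibre square by (simp_all add: c_def c'_def)
  have h_eq: "h = \<mu> g \<otimes>\<^bsub>G2\<^esub> c" "h' = \<mu> g' \<otimes>\<^bsub>G2\<^esub> c'"
    using g h by (simp_all add: c_def c'_def)
  show ?thesis
    using g c \<mu>.H.mla_center_subset_group_center
    by (simp add: h_eq \<mu>.H.commg_mult_central \<mu>.H.star_mult_center \<mu>.hom_commg \<mu>.hom_star subsetD)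
qed

theorem proposition4p8:
  assumes E1: "central_extension H1 G1 K1 \<alpha>1 \<beta>1"
      and E2: "central_extension H2 G2 K2 \<alpha>2 \<beta>2"
      and Z1: "\<alpha>1 ` carrier H1 = mla_center G1"
      and Z2: "\<alpha>2 ` carrier H2 = mla_center G2"
      and mor: "ext_morphism H1 G1 K1 \<alpha>1 \<beta>1 H2 G2 K2 \<alpha>2 \<beta>2 lam \<mu> \<nu>"
      and ker: "kernel G1 G2 \<mu> \<inter> M_comm G1 = {\<one>\<^bsub>G1\<^esub>}"
      and surj: "(\<mu> ` carrier G1) <#>\<^bsub>G2\<^esub> (\<alpha>2 ` carrier H2) = carrier G2"
  shows "isoclinic_morphism H1 G1 K1 \<alpha>1 \<beta>1 H2 G2 K2 \<alpha>2 \<beta>2 lam \<mu> \<nu>"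
proof -
  interpret \<mu>: mla_morphism_onto_mod_center G1 G2 \<mu>
    using ext_morphism_mla_morphisms(1)[OF E1 E2 mor] surj Z2
    by (simp add: mla_morphism_onto_mod_center_def mla_morphism_onto_mod_center_axioms_def)
  have "bij_betw \<nu> (carrier K1) (carrier K2)"
    using ext_morphism_quotient_bij[OF E1 E2 Z1 Z2 mor \<mu>.mla_center_preimage[OF ker]]
      \<mu>.image_mult_center by blast
  moreover have "bij_betw \<mu> (M_comm G1) (M_comm G2)"
    by (simp add: bij_betw_def \<mu>.inj_on_M_comm[OF ker] \<mu>.image_M_comm)
  ultimately show ?thesis
    using mor ext_morphism_commg_star[OF E1 E2 Z2 mor] by (simp add: isoclinic_morphism_def)
qed

end
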